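(* Suppose (A1) there are constants $G,M>0$ with $\|\nabla_\theta\log\pi_\theta(a|s)\|_2\le G$ and $\|\nabla^2_\theta\log\pi_\theta(a|s)\|_2\le M$ for all $a\in\mathcal{A}$, $s\in\mathcal{S}$, $\theta\in\mathbb{R}^d$; and (A3) there is $W<\infty$ such that $\mathrm{Var}_{\tau\sim p(\cdot|\theta_2)}(\omega(\tau|\theta_1,\theta_2))\le W$ for all $\theta_1,\theta_2\in\mathbb{R}^d$. Let $\tilde\theta^s$ be the reference point of an epoch of SVRPG and $\theta_t^{s+1}$ an inner iterate (more generally, any $\tilde\theta^s,\theta_t^{s+1}\in\mathbb{R}^d$). Then, with $\tau\sim p(\cdot|\theta_t^{s+1})$, $$\mathrm{Var}\big(\omega(\tau|\tilde\theta^s,\theta_t^{s+1})\big)\le C_\omega\|\tilde\theta^s-\theta_t^{s+1}\|_2^2,\qquad C_\omega=H(2HG^2+M)(W+1).$$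
   Context: MDP setting: state space $\mathcal{S}$, action space $\mathcal{A}$, transition probabilities $P(s'|s,a)$, initial state distribution $\rho$, horizon $H$. A policy $\pi_\theta(a|s)$ is parameterized by $\theta\in\mathbb{R}^d$. A trajectory is $\tau=(s_0,a_0,\dots,s_{H-1},a_{H-1},s_H)$ with density $p(\tau|\theta)=\rho(s_0)\prod_{h=0}^{H-1}\pi_\theta(a_h|s_h)P(s_{h+1}|s_h,a_h)$. The importance weight is $\omega(\tau|\theta_1,\theta_2)=p(\tau|\theta_1)/p(\tau|\theta_2)$, and its variance is taken over $\tau\sim p(\cdot|\theta_2)$. In SVRPG, each epoch fixes a reference parameter $\tilde\theta^s$ and produces inner iterates $\theta_t^{s+1}$ by stochastic gradient ascent steps. *)

theory Defs
  imports "HOL-Analysis.Analysis"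
begin

text \<open>Trajectories tau = (s_0,a_0,...,s_{H-1},a_{H-1},s_H) are represented as pairs (ss, as)
  with ss a state sequence indexed by {..H} and as an action sequence indexed by {..<H}.
  The base measure on trajectories is the product of the base measures mS on states and
  mA on actions; densities rho, pol, P are taken w.r.t. mS resp. mA.
  pol th a s stands for pi_theta(a|s), P s' s a for P(s'|s,a).\<close>

definition traj_base :: "'s measure \<Rightarrow> 'a measure \<Rightarrow> nat \<Rightarrow> ((nat \<Rightarrow> 's) \<times> (nat \<Rightarrow> 'a)) measure" where
  "traj_base mS mA H = (PiM {..H} (\<lambda>_. mS)) \<Otimes>\<^sub>M (PiM {..<H} (\<lambda>_. mA))"

definition traj_dens ::
  "('s \<Rightarrow> real) \<Rightarrow> ('th \<Rightarrow> 'a \<Rightarrow> 's \<Rightarrow> real) \<Rightarrow> ('s \<Rightarrow> 's \<Rightarrow> 'a \<Rightarrow> real) \<Rightarrow> nat \<Rightarrow> 'th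
    \<Rightarrow> (nat \<Rightarrow> 's) \<times> (nat \<Rightarrow> 'a) \<Rightarrow> real" where
  "traj_dens rho pol P H th = (\<lambda>(ss, as). rho (ss 0) *
      (\<Prod>h<H. pol th (as h) (ss h) * P (ss (Suc h)) (ss h) (as h)))"

definition traj_dist ::
  "'s measure \<Rightarrow> 'a measure \<Rightarrow> ('s \<Rightarrow> real) \<Rightarrow> ('th \<Rightarrow> 'a \<Rightarrow> 's \<Rightarrow> real) \<Rightarrow> ('s \<Rightarrow> 's \<Rightarrow> 'a \<Rightarrow> real)
    \<Rightarrow> nat \<Rightarrow> 'th \<Rightarrow> ((nat \<Rightarrow> 's) \<times> (nat \<Rightarrow> 'a)) measure" where
  "traj_dist mS mA rho pol P H th =
     density (traj_base mS mA H) (\<lambda>\<tau>. ennreal (traj_dens rho pol P H th \<tau>))"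

definition imp_weight ::
  "('s \<Rightarrow> real) \<Rightarrow> ('th \<Rightarrow> 'a \<Rightarrow> 's \<Rightarrow> real) \<Rightarrow> ('s \<Rightarrow> 's \<Rightarrow> 'a \<Rightarrow> real) \<Rightarrow> nat \<Rightarrow> 'th \<Rightarrow> 'th
    \<Rightarrow> (nat \<Rightarrow> 's) \<times> (nat \<Rightarrow> 'a) \<Rightarrow> real" where
  "imp_weight rho pol P H th1 th2 \<tau> = traj_dens rho pol P H th1 \<tau> / traj_dens rho pol P H th2 \<tau>"

definition var_of :: "'b measure \<Rightarrow> ('b \<Rightarrow> real) \<Rightarrow> real" where
  "var_of D X = (\<integral>x. (X x - (\<integral>y. X y \<partial>D))\<^sup>2 \<partial>D)"

end

theory Submission
  imports Defs "HOL-Probability.Probability"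
begin

text \<open>The initial distribution and the transition densities cancel in the importance weight, so
  \<open>log \<omega>(\<tau>|\<theta>\<^sub>1,\<theta>\<^sub>2)\<close> is the sum over the horizon of
  \<open>log \<pi>\<^bsub>\<theta>\<^sub>1\<^esub>(a\<^sub>h|s\<^sub>h) - log \<pi>\<^bsub>\<theta>\<^sub>2\<^esub>(a\<^sub>h|s\<^sub>h)\<close>;
  by the mean value theorem and the gradient bound its modulus is at most
  \<open>L = H G \<parallel>\<theta>\<^sub>1 - \<theta>\<^sub>2\<parallel>\<close>. From \<open>(exp x - 1)\<^sup>2 \<le> x\<^sup>2 ((exp x)\<^sup>2 + 1)\<close> we get
  \<open>Var \<omega> \<le> E (\<omega> - 1)\<^sup>2 \<le> L\<^sup>2 (E \<omega>\<^sup>2 + 1)\<close>, and \<open>E \<omega>\<^sup>2 = Var \<omega> + (E \<omega>)\<^sup>2 \<le> W + 1\<close>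
  because \<open>E \<omega> \<le> 1\<close>.\<close>

lemma abs_diff_le_of_gderiv_bound:
  fixes f :: "'a::real_inner \<Rightarrow> real"
  assumes deriv: "\<And>x. GDERIV f x :> f' x" and bound: "\<And>x. norm (f' x) \<le> G"
  shows "\<bar>f x - f y\<bar> \<le> G * norm (x - y)"
proof -
  have "norm (f x - f y) \<le> G * norm (x - y)"
  proof (rule differentiable_bound[where S = UNIV and f' = "\<lambda>x h. h \<bullet> f' x"])
    fix z
    show "(f has_derivative (\<lambda>h. h \<bullet> f' z)) (at z within UNIV)"
      using deriv[of z] by (simp add: gderiv_def)
    show "onorm (\<lambda>h. h \<bullet> f' z) \<le> G"
    proof (rule onorm_bound)
      show "0 \<le> G" using bound[of z] norm_ge_zero order_trans by blast
      fix h
      have "norm (h \<bullet> f' z) \<le> norm h * norm (f' z)" by (simp add: Cauchy_Schwarz_ineq2)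
      also have "\<dots> \<le> G * norm h" by (metis bound mult.commute mult_left_mono norm_ge_zero)
      finally show "norm (h \<bullet> f' z) \<le> G * norm h" .
    qed
  qed auto
  then show ?thesis by simp
qed

lemma power2_exp_minus_one_le:
  fixes x :: real
  shows "(exp x - 1)\<^sup>2 \<le> x\<^sup>2 * ((exp x)\<^sup>2 + 1)"
proof (cases "x \<ge> 0")
  case True
  have "exp x - 1 \<le> x * exp x"
    using exp_ge_add_one_self[of "-x"] by (simp add: exp_minus field_simps)
  with True have "(exp x - 1)\<^sup>2 \<le> (x * exp x)\<^sup>2" by (intro power_mono) simp_all
  then show ?thesis
    unfolding power_mult_distrib distrib_left using zero_le_power2[of x] by linarith
next
  case False
  have "1 - exp x \<le> - x" using exp_ge_add_one_self[of x] by linarith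
  with False have "(1 - exp x)\<^sup>2 \<le> (- x)\<^sup>2" by (intro power_mono) simp_all
  then have "(exp x - 1)\<^sup>2 \<le> x\<^sup>2" by (simp add: power2_commute)
  also have "\<dots> \<le> x\<^sup>2 * ((exp x)\<^sup>2 + 1)" by (simp add: algebra_simps)
  finally show ?thesis .
qed

lemma (in prob_space) variance_le_expectation_power2_diff:
  fixes X :: "'a \<Rightarrow> real"
  assumes X: "integrable M X" and X2: "integrable M (\<lambda>x. (X x)\<^sup>2)"
  shows "variance X \<le> expectation (\<lambda>x. (X x - c)\<^sup>2)"
proof -
  have "expectation (\<lambda>x. (X x - c)\<^sup>2) = expectation (\<lambda>x. (X x)\<^sup>2 - 2 * c * X x + c\<^sup>2)"
    by (simp add: power2_diff algebra_simps)
  also have "\<dots> = expectation (\<lambda>x. (X x)\<^sup>2) - 2 * c * expectation X + c\<^sup>2"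
    using X X2 by (simp add: prob_space)
  also have "\<dots> = variance X + (expectation X - c)\<^sup>2"
    using X X2 by (simp add: variance_eq prob_space power2_eq_square algebra_simps)
  finally show ?thesis by simp
qed

lemma (in prob_space) variance_le_of_exp_bounded:
  fixes w X :: "'a \<Rightarrow> real"
  assumes w_meas: "w \<in> borel_measurable M" and w2: "integrable M (\<lambda>x. (w x)\<^sup>2)"
    and w_exp: "AE x in M. w x = exp (X x)" and X_bound: "\<And>x. \<bar>X x\<bar> \<le> L"
    and mean_le: "expectation w \<le> 1"
  shows "variance w \<le> L\<^sup>2 * (variance w + 2)"
proof -
  have w: "integrable M w" by (rule square_integrable_imp_integrable[OF w_meas w2])
  have "0 \<le> expectation w"
    by (rule integral_nonneg_AE) (use w_exp in eventually_elim, simp)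
  with mean_le have mean_sq_le: "(expectation w)\<^sup>2 \<le> 1" by (simp add: power_le_one)
  have pointwise: "AE x in M. (w x - 1)\<^sup>2 \<le> L\<^sup>2 * ((w x)\<^sup>2 + 1)"
    using w_exp
  proof eventually_elim
    case (elim x)
    have "(X x)\<^sup>2 \<le> L\<^sup>2" using X_bound[of x] by (metis abs_ge_zero power2_abs power_mono)
    then have "(X x)\<^sup>2 * ((w x)\<^sup>2 + 1) \<le> L\<^sup>2 * ((w x)\<^sup>2 + 1)" by (simp add: mult_right_mono)
    with power2_exp_minus_one_le[of "X x"] elim show ?case by simp
  qed
  have "variance w \<le> expectation (\<lambda>x. (w x - 1)\<^sup>2)"
    by (rule variance_le_expectation_power2_diff[OF w w2])
  also have "\<dots> \<le> expectation (\<lambda>x. L\<^sup>2 * ((w x)\<^sup>2 + 1))"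
    using w w2 pointwise by (intro integral_mono_AE) (auto simp: power2_diff)
  also have "\<dots> = L\<^sup>2 * (variance w + (expectation w)\<^sup>2 + 1)"
    using w w2 by (simp add: variance_eq prob_space)
  also have "\<dots> \<le> L\<^sup>2 * (variance w + 2)"
    using mean_sq_le by (intro mult_left_mono) simp_all
  finally show ?thesis .
qed

lemma nn_integral_density_ratio_le:
  fixes f g :: "'a \<Rightarrow> real"
  assumes [measurable]: "f \<in> borel_measurable M" "g \<in> borel_measurable M"
  shows "(\<integral>\<^sup>+ x. ennreal (f x / g x) \<partial>density M (\<lambda>x. ennreal (g x))) \<le> (\<integral>\<^sup>+ x. ennreal (f x) \<partial>M)"
proof -
  have "ennreal (g x) * ennreal (f x / g x) \<le> ennreal (f x)" for x
  proof (cases "g x > 0")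
    case True
    then show ?thesis by (simp add: ennreal_mult'[symmetric])
  next
    case False
    then show ?thesis by (simp add: ennreal_neg)
  qed
  then show ?thesis by (simp add: nn_integral_density nn_integral_mono)
qed

lemma nn_integral_markov_chain:
  fixes mu :: "'s \<Rightarrow> ennreal" and K :: "'s \<Rightarrow> 's \<Rightarrow> ennreal"
  assumes "sigma_finite_measure M"
    and [measurable]: "mu \<in> borel_measurable M" "(\<lambda>(s, s'). K s s') \<in> borel_measurable (M \<Otimes>\<^sub>M M)"
    and K_prob: "\<And>s. s \<in> space M \<Longrightarrow> (\<integral>\<^sup>+ s'. K s s' \<partial>M) = 1"
  shows "(\<integral>\<^sup>+ ss. mu (ss 0) * (\<Prod>h<n. K (ss h) (ss (Suc h))) \<partial>PiM {..n} (\<lambda>_. M))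
    = (\<integral>\<^sup>+ s. mu s \<partial>M)"
proof -
  interpret product_sigma_finite "\<lambda>_::nat. M"
    using assms(1) by (simp add: product_sigma_finite_def)
  show ?thesis
  proof (induction n)
    case 0
    show ?case using product_nn_integral_singleton[of mu 0] by simp
  next
    case (Suc n)
    let ?chain = "\<lambda>ss. mu (ss 0) * (\<Prod>h<n. K (ss h) (ss (Suc h)))"
    have "{..Suc n} = insert (Suc n) {..n}" by auto
    then have "(\<integral>\<^sup>+ ss. ?chain ss * K (ss n) (ss (Suc n)) \<partial>PiM {..Suc n} (\<lambda>_. M))
      = (\<integral>\<^sup>+ ss. (\<integral>\<^sup>+ s'. ?chain ss * K (ss n) s' \<partial>M) \<partial>PiM {..n} (\<lambda>_. M))"
      by (simp add: product_nn_integral_insert)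
    also have "\<dots> = (\<integral>\<^sup>+ ss. ?chain ss \<partial>PiM {..n} (\<lambda>_. M))"
    proof (rule nn_integral_cong)
      fix ss assume "ss \<in> space (PiM {..n} (\<lambda>_. M))"
      then have "ss n \<in> space M" by (auto simp: space_PiM)
      then show "(\<integral>\<^sup>+ s'. ?chain ss * K (ss n) s' \<partial>M) = ?chain ss"
        by (simp add: nn_integral_cmult K_prob)
    qed
    finally show ?case by (simp add: mult.assoc Suc.IH)
  qed
qed

definition traj_log_ratio ::
  "('th \<Rightarrow> 'a \<Rightarrow> 's \<Rightarrow> real) \<Rightarrow> nat \<Rightarrow> 'th \<Rightarrow> 'th \<Rightarrow> (nat \<Rightarrow> 's) \<times> (nat \<Rightarrow> 'a) \<Rightarrow> real" where
  "traj_log_ratio pol H th1 th2 =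
    (\<lambda>(ss, as). \<Sum>h<H. ln (pol th1 (as h) (ss h)) - ln (pol th2 (as h) (ss h)))"

lemma traj_dens_eq_exp_log_ratio:
  assumes pos1: "\<And>a s. pol th1 a s > 0" and pos2: "\<And>a s. pol th2 a s > 0"
  shows "traj_dens rho pol P H th1 \<tau>
    = exp (traj_log_ratio pol H th1 th2 \<tau>) * traj_dens rho pol P H th2 \<tau>"
proof -
  obtain ss as where \<tau>: "\<tau> = (ss, as)" by fastforce
  let ?r = "\<lambda>h. pol th1 (as h) (ss h) / pol th2 (as h) (ss h)"
  have "exp (traj_log_ratio pol H th1 th2 \<tau>) = (\<Prod>h<H. ?r h)"
    by (simp add: \<tau> traj_log_ratio_def exp_sum exp_diff pos1 pos2)
  moreover have "(\<Prod>h<H. pol th1 (as h) (ss h) * P (ss (Suc h)) (ss h) (as h))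
    = (\<Prod>h<H. ?r h) * (\<Prod>h<H. pol th2 (as h) (ss h) * P (ss (Suc h)) (ss h) (as h))"
    by (subst prod.distrib[symmetric], rule prod.cong) (auto simp: pos2 less_imp_neq[symmetric])
  ultimately show ?thesis by (simp add: \<tau> traj_dens_def)
qed

lemma abs_traj_log_ratio_le:
  fixes pol :: "'v::real_inner \<Rightarrow> 'a \<Rightarrow> 's \<Rightarrow> real"
  assumes "\<And>th a s. GDERIV (\<lambda>th'. ln (pol th' a s)) th :> lgrad th a s"
    and "\<And>th a s. norm (lgrad th a s) \<le> G"
  shows "\<bar>traj_log_ratio pol H th1 th2 \<tau>\<bar> \<le> real H * G * norm (th1 - th2)"
proof -
  obtain ss as where \<tau>: "\<tau> = (ss, as)" by fastforce
  have "\<bar>traj_log_ratio pol H th1 th2 \<tau>\<bar>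
      \<le> (\<Sum>h<H. \<bar>ln (pol th1 (as h) (ss h)) - ln (pol th2 (as h) (ss h))\<bar>)"
    unfolding \<tau> traj_log_ratio_def by (simp add: sum_abs)
  also have "\<dots> \<le> (\<Sum>h<H. G * norm (th1 - th2))"
    by (rule sum_mono) (rule abs_diff_le_of_gderiv_bound[OF assms])
  finally show ?thesis by simp
qed

locale parametric_mdp =
  S: sigma_finite_measure mS + A: sigma_finite_measure mA
  for mS :: "'s measure" and mA :: "'a measure"
    and rho :: "'s \<Rightarrow> real" and pol :: "'th \<Rightarrow> 'a \<Rightarrow> 's \<Rightarrow> real"
    and P :: "'s \<Rightarrow> 's \<Rightarrow> 'a \<Rightarrow> real" +
  assumes rho_measurable[measurable]: "rho \<in> borel_measurable mS"
    and rho_nonneg: "\<And>s. s \<in> space mS \<Longrightarrow> rho s \<ge> 0"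
    and rho_prob: "(\<integral>\<^sup>+ s. ennreal (rho s) \<partial>mS) = 1"
    and pol_measurable: "\<And>th. (\<lambda>(a, s). pol th a s) \<in> borel_measurable (mA \<Otimes>\<^sub>M mS)"
    and pol_nonneg: "\<And>th a s. pol th a s \<ge> 0"
    and pol_prob: "\<And>th s. s \<in> space mS \<Longrightarrow> (\<integral>\<^sup>+ a. ennreal (pol th a s) \<partial>mA) = 1"
    and P_measurable: "(\<lambda>(s', s, a). P s' s a) \<in> borel_measurable (mS \<Otimes>\<^sub>M (mS \<Otimes>\<^sub>M mA))"
    and P_nonneg: "\<And>s' s a. s' \<in> space mS \<Longrightarrow> s \<in> space mS \<Longrightarrow> a \<in> space mA \<Longrightarrow> P s' s a \<ge> 0"
    and P_prob: "\<And>s a. s \<in> space mS \<Longrightarrow> a \<in> space mA \<Longrightarrow> (\<integral>\<^sup>+ s'. ennreal (P s' s a) \<partial>mS) = 1"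
begin

lemma pol_measurable_comp[measurable (raw)]:
  "f \<in> measurable N mA \<Longrightarrow> g \<in> measurable N mS \<Longrightarrow> (\<lambda>x. pol th (f x) (g x)) \<in> borel_measurable N"
  using measurable_compose[OF measurable_Pair pol_measurable] by simp

lemma P_measurable_comp[measurable (raw)]:
  "f \<in> measurable N mS \<Longrightarrow> g \<in> measurable N mS \<Longrightarrow> h \<in> measurable N mA
    \<Longrightarrow> (\<lambda>x. P (f x) (g x) (h x)) \<in> borel_measurable N"
  using measurable_compose[OF measurable_Pair[OF _ measurable_Pair] P_measurable] by simp

lemma traj_dens_measurable[measurable]:
  "traj_dens rho pol P H th \<in> borel_measurable (traj_base mS mA H)"
  unfolding traj_dens_def traj_base_def by measurable

lemma traj_dens_nonneg:
  "\<tau> \<in> space (traj_base mS mA H) \<Longrightarrow> traj_dens rho pol P H th \<tau> \<ge> 0"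
  by (auto simp: traj_dens_def traj_base_def space_pair_measure space_PiM PiE_def Pi_def
      intro!: mult_nonneg_nonneg prod_nonneg rho_nonneg pol_nonneg P_nonneg)

definition state_kernel :: "'th \<Rightarrow> 's \<Rightarrow> 's \<Rightarrow> ennreal" where
  "state_kernel th s s' = (\<integral>\<^sup>+ a. ennreal (pol th a s) * ennreal (P s' s a) \<partial>mA)"

lemma state_kernel_measurable[measurable]:
  "(\<lambda>(s, s'). state_kernel th s s') \<in> borel_measurable (mS \<Otimes>\<^sub>M mS)"
  unfolding state_kernel_def by measurable

lemma state_kernel_prob:
  assumes s: "s \<in> space mS"
  shows "(\<integral>\<^sup>+ s'. state_kernel th s s' \<partial>mS) = 1"
proof -
  interpret pair_sigma_finite mA mS ..
  have "(\<integral>\<^sup>+ s'. state_kernel th s s' \<partial>mS)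
      = (\<integral>\<^sup>+ a. (\<integral>\<^sup>+ s'. ennreal (pol th a s) * ennreal (P s' s a) \<partial>mS) \<partial>mA)"
    unfolding state_kernel_def using s by (intro Fubini') measurable
  also have "\<dots> = (\<integral>\<^sup>+ a. ennreal (pol th a s) \<partial>mA)"
    using s by (intro nn_integral_cong) (simp add: nn_integral_cmult P_prob)
  also have "\<dots> = 1" by (rule pol_prob[OF s])
  finally show ?thesis .
qed

lemma nn_integral_traj_dens_actions:
  assumes ss: "ss \<in> space (PiM {..H} (\<lambda>_. mS))"
  shows "(\<integral>\<^sup>+ as. ennreal (traj_dens rho pol P H th (ss, as)) \<partial>PiM {..<H} (\<lambda>_. mA))
    = ennreal (rho (ss 0)) * (\<Prod>h<H. state_kernel th (ss h) (ss (Suc h)))"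
proof -
  interpret product_sigma_finite "\<lambda>_::nat. mA"
    by (simp add: product_sigma_finite_def A.sigma_finite_measure_axioms)
  have ss_space: "ss h \<in> space mS" if "h \<le> H" for h using ss that by (auto simp: space_PiM)
  define step where "step h a = ennreal (pol th a (ss h)) * ennreal (P (ss (Suc h)) (ss h) a)" for h a
  have "(\<integral>\<^sup>+ as. ennreal (traj_dens rho pol P H th (ss, as)) \<partial>PiM {..<H} (\<lambda>_. mA))
    = (\<integral>\<^sup>+ as. ennreal (rho (ss 0)) * (\<Prod>h<H. step h (as h)) \<partial>PiM {..<H} (\<lambda>_. mA))"
  proof (rule nn_integral_cong)
    fix as assume "as \<in> space (PiM {..<H} (\<lambda>_. mA))"
    then have "as h \<in> space mA" if "h < H" for h using that by (auto simp: space_PiM)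
    then have "ennreal (\<Prod>h<H. pol th (as h) (ss h) * P (ss (Suc h)) (ss h) (as h))
      = (\<Prod>h<H. step h (as h))"
      unfolding step_def by (subst prod_ennreal[symmetric])
        (auto simp: ennreal_mult' pol_nonneg P_nonneg ss_space intro!: prod.cong)
    then show "ennreal (traj_dens rho pol P H th (ss, as))
      = ennreal (rho (ss 0)) * (\<Prod>h<H. step h (as h))"
      by (simp add: traj_dens_def ennreal_mult' rho_nonneg ss_space)
  qed
  also have "\<dots> = ennreal (rho (ss 0)) * (\<Prod>h<H. state_kernel th (ss h) (ss (Suc h)))"
    using ss_space unfolding step_def
    by (subst nn_integral_cmult, measurable, subst product_nn_integral_prod)
      (auto simp: state_kernel_def)
  finally show ?thesis .
qed

lemma nn_integral_traj_dens:
  "(\<integral>\<^sup>+ \<tau>. ennreal (traj_dens rho pol P H th \<tau>) \<partial>traj_base mS mA H) = 1"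
proof -
  interpret PA: product_sigma_finite "\<lambda>_::nat. mA"
    by (simp add: product_sigma_finite_def A.sigma_finite_measure_axioms)
  interpret sigma_finite_measure "PiM {..<H} (\<lambda>_. mA)" by (rule PA.sigma_finite) simp
  have "(\<integral>\<^sup>+ \<tau>. ennreal (traj_dens rho pol P H th \<tau>) \<partial>traj_base mS mA H)
    = (\<integral>\<^sup>+ ss. (\<integral>\<^sup>+ as. ennreal (traj_dens rho pol P H th (ss, as)) \<partial>PiM {..<H} (\<lambda>_. mA))
        \<partial>PiM {..H} (\<lambda>_. mS))"
    using traj_dens_measurable[of H th]
    unfolding traj_base_def by (intro nn_integral_fst[symmetric]) simp
  also have "\<dots> = (\<integral>\<^sup>+ ss. ennreal (rho (ss 0)) * (\<Prod>h<H. state_kernel th (ss h) (ss (Suc h)))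
        \<partial>PiM {..H} (\<lambda>_. mS))"
    by (intro nn_integral_cong nn_integral_traj_dens_actions)
  also have "\<dots> = (\<integral>\<^sup>+ s. ennreal (rho s) \<partial>mS)"
    by (rule nn_integral_markov_chain[OF S.sigma_finite_measure_axioms _ state_kernel_measurable
          state_kernel_prob]) measurable
  also have "\<dots> = 1" by (rule rho_prob)
  finally show ?thesis .
qed

lemma prob_space_traj_dist: "prob_space (traj_dist mS mA rho pol P H th)"
  by standard (use nn_integral_traj_dens[of H th] in \<open>simp add: traj_dist_def emeasure_density\<close>)

lemma imp_weight_measurable[measurable]:
  "imp_weight rho pol P H th1 th2 \<in> borel_measurable (traj_dist mS mA rho pol P H th)"
  unfolding imp_weight_def[abs_def] traj_dist_def by simp

lemma integral_imp_weight_le_1: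
  "(\<integral>\<tau>. imp_weight rho pol P H th1 th2 \<tau> \<partial>traj_dist mS mA rho pol P H th2) \<le> 1"
proof -
  let ?D = "traj_dist mS mA rho pol P H th2" and ?w = "imp_weight rho pol P H th1 th2"
  \<comment> \<open>not \<open>= 1\<close>: \<open>?w\<close> only recovers \<open>p(\<cdot>|th1)\<close> where \<open>p(\<cdot>|th2)\<close> is positive\<close>
  have "(\<integral>\<^sup>+ \<tau>. ennreal (?w \<tau>) \<partial>?D)
    \<le> (\<integral>\<^sup>+ \<tau>. ennreal (traj_dens rho pol P H th1 \<tau>) \<partial>traj_base mS mA H)"
    unfolding traj_dist_def imp_weight_def by (rule nn_integral_density_ratio_le) measurable
  also have "\<dots> = 1" by (rule nn_integral_traj_dens)
  finally have "(\<integral>\<^sup>+ \<tau>. ennreal (?w \<tau>) \<partial>?D) \<le> 1" .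
  moreover have "AE \<tau> in ?D. 0 \<le> ?w \<tau>"
    by (rule AE_I2) (simp add: traj_dist_def imp_weight_def traj_dens_nonneg)
  ultimately show ?thesis
    by (simp add: integral_eq_nn_integral enn2real_leI)
qed

lemma AE_imp_weight_eq_exp:
  assumes "\<And>a s. pol th1 a s > 0" and "\<And>a s. pol th2 a s > 0"
  shows "AE \<tau> in traj_dist mS mA rho pol P H th2.
    imp_weight rho pol P H th1 th2 \<tau> = exp (traj_log_ratio pol H th1 th2 \<tau>)"
proof -
  have "AE \<tau> in traj_dist mS mA rho pol P H th2. traj_dens rho pol P H th2 \<tau> \<noteq> 0"
    unfolding traj_dist_def by (subst AE_density) (auto intro!: AE_I2)
  then show ?thesis
    by eventually_elim (simp add: imp_weight_def traj_dens_eq_exp_log_ratio[of pol th1 th2, OF assms])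
qed

end

theorem lemma1:
  fixes mS :: "'s measure" and mA :: "'a measure"
    and rho :: "'s \<Rightarrow> real"
    and pol :: "real^'d \<Rightarrow> 'a \<Rightarrow> 's \<Rightarrow> real"
    and P :: "'s \<Rightarrow> 's \<Rightarrow> 'a \<Rightarrow> real"
    and H :: nat
    and lgrad :: "real^'d \<Rightarrow> 'a \<Rightarrow> 's \<Rightarrow> real^'d"
    and lhess :: "real^'d \<Rightarrow> 'a \<Rightarrow> 's \<Rightarrow> real^'d \<Rightarrow> real^'d"
    and G M W :: real
    and th_ref th_t :: "real^'d"
  assumes sfS: "sigma_finite_measure mS" and sfA: "sigma_finite_measure mA"
    and rho_meas: "rho \<in> borel_measurable mS"
    and rho_nonneg: "\<And>s. s \<in> space mS \<Longrightarrow> rho s \<ge> 0"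
    and rho_prob: "(\<integral>\<^sup>+ s. ennreal (rho s) \<partial>mS) = 1"
    and pol_meas: "\<And>th. (\<lambda>(a, s). pol th a s) \<in> borel_measurable (mA \<Otimes>\<^sub>M mS)"
    and pol_pos: "\<And>th a s. pol th a s > 0"
    and pol_prob: "\<And>th s. s \<in> space mS \<Longrightarrow> (\<integral>\<^sup>+ a. ennreal (pol th a s) \<partial>mA) = 1"
    and P_meas: "(\<lambda>(s', s, a). P s' s a) \<in> borel_measurable (mS \<Otimes>\<^sub>M (mS \<Otimes>\<^sub>M mA))"
    and P_nonneg: "\<And>s' s a. s' \<in> space mS \<Longrightarrow> s \<in> space mS \<Longrightarrow> a \<in> space mA \<Longrightarrow> P s' s a \<ge> 0"
    and P_prob: "\<And>s a. s \<in> space mS \<Longrightarrow> a \<in> space mA \<Longrightarrow> (\<integral>\<^sup>+ s'. ennreal (P s' s a) \<partial>mS) = 1"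
    and A1_grad: "\<And>th a s. GDERIV (\<lambda>th'. ln (pol th' a s)) th :> lgrad th a s"
    and A1_hess: "\<And>th a s. ((\<lambda>th'. lgrad th' a s) has_derivative lhess th a s) (at th)"
    and G_pos: "G > 0" and M_pos: "M > 0"
    and A1_G: "\<And>th a s. norm (lgrad th a s) \<le> G"
    and A1_M: "\<And>th a s. onorm (lhess th a s) \<le> M"
    and A3: "\<And>th1 th2. integrable (traj_dist mS mA rho pol P H th2)
                 (\<lambda>\<tau>. (imp_weight rho pol P H th1 th2 \<tau>)\<^sup>2)
             \<and> var_of (traj_dist mS mA rho pol P H th2) (imp_weight rho pol P H th1 th2) \<le> W"
  shows "var_of (traj_dist mS mA rho pol P H th_t) (imp_weight rho pol P H th_ref th_t)
           \<le> real H * (2 * real H * G\<^sup>2 + M) * (W + 1) * (norm (th_ref - th_t))\<^sup>2"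
proof -
  interpret parametric_mdp mS mA rho pol P
    using sfS sfA rho_meas rho_nonneg rho_prob pol_meas pol_pos pol_prob P_meas P_nonneg P_prob
    by (simp add: parametric_mdp_def parametric_mdp_axioms_def less_imp_le)
  let ?D = "traj_dist mS mA rho pol P H th_t" and ?w = "imp_weight rho pol P H th_ref th_t"
  define L where "L = real H * G * norm (th_ref - th_t)"
  interpret D: prob_space ?D by (rule prob_space_traj_dist)
  have var_le_W: "D.variance ?w \<le> W" and w2: "integrable ?D (\<lambda>\<tau>. (?w \<tau>)\<^sup>2)"
    using A3[of th_t th_ref] by (simp_all add: var_of_def)
  have W_nonneg: "0 \<le> W" using D.variance_positive var_le_W by (rule order_trans)
  have "D.variance ?w \<le> L\<^sup>2 * (D.variance ?w + 2)"
    unfolding L_def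
    by (rule D.variance_le_of_exp_bounded[OF _ w2 AE_imp_weight_eq_exp[OF pol_pos pol_pos]
          abs_traj_log_ratio_le[OF A1_grad A1_G] integral_imp_weight_le_1]) simp
  also have "\<dots> \<le> L\<^sup>2 * (W + 2)" using var_le_W by (simp add: mult_left_mono)
  also have "\<dots> \<le> 2 * L\<^sup>2 * (W + 1)"
    using W_nonneg by (simp add: algebra_simps)
  also have "\<dots> \<le> 2 * L\<^sup>2 * (W + 1) + real H * M * (W + 1) * (norm (th_ref - th_t))\<^sup>2"
    using W_nonneg M_pos by simp
  also have "\<dots> = real H * (2 * real H * G\<^sup>2 + M) * (W + 1) * (norm (th_ref - th_t))\<^sup>2"
    by (simp add: L_def power2_eq_square algebra_simps)
  finally show ?thesis by (simp add: var_of_def)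
qed

end
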